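(* Consider the uplink model described in the context with maximum ratio combining, i.e. $\mathbf{c}_k=\Phi\mathbf{D}\hat{\mathbf{h}}_k$ for each $k\in\{1,\dots,K\}$. Then for every $k$, the uplink achievable rate satisfies $$R^U_k \ \ge\ \underline{R}^{\mathrm{MRC},U}_k=\frac{T_U}{T}\log_2\!\big(1+\mathrm{SINR}^{\mathrm{MRC},U}_k\big),$$ where $$\mathrm{SINR}^{\mathrm{MRC},U}_k=\frac{M\,p^d_k\,\rho\,\tau\,p^p_k\,\beta_k^2\,|\Phi|^2}{\Big(\sum_{k'=1}^K p^d_{k'}\beta_{k'}+\frac{\sigma^2}{|\Phi|^2\rho}\Big)\big(\rho\,\tau\,p^p_k\,\beta_k\,|\Phi|^2+\sigma^2\big)}.$$
   Context: Let $M,K,T$ be positive integers, $\tau=K$, and $T_U\ge 0$ an integer. Let $\Phi\in\mathbb{C}\setminus\{0\}$, $\rho>0$, $\sigma^2>0$, and let $\mathbf{D}\in\mathbb{C}^{M\times M}$ be a diagonal matrix whose diagonal entries have unit modulus (so $\mathbf{D}^H\mathbf{D}=\mathbf{I}_M$). For $k=1,\dots,K$ let $\beta_k>0$, pilot powers $p^p_k>0$ and data powers $p^d_k\ge 0$. The channels $\mathbf{h}_k\sim\mathcal{CN}(\mathbf{0},\beta_k\mathbf{I}_M)$, $k=1,\dots,K$, are mutually independent. The received pilot observation for device $k$ is $\mathbf{y}_k=\sqrt{\rho\tau p^p_k}\,\Phi\mathbf{D}\mathbf{h}_k+\mathbf{z}_k$, where $\mathbf{z}_k\sim\mathcal{CN}(\mathbf{0},\sigma^2\mathbf{I}_M)$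 are mutually independent and independent of the channels. The MMSE channel estimate is $$\hat{\mathbf{h}}_k=\frac{\rho\beta_k\tau p^p_k|\Phi|^2}{\rho\beta_k\tau p^p_k|\Phi|^2+\sigma^2}\mathbf{h}_k+\frac{\sqrt{\rho\tau p^p_k}\,\beta_k\Phi^*}{\rho\beta_k\tau p^p_k|\Phi|^2+\sigma^2}\mathbf{D}^H\mathbf{z}_k .$$ In the uplink data phase, $\mathbf{n}\sim\mathcal{CN}(\mathbf{0},\sigma^2\mathbf{I}_M)$ is noise independent of everything else, and $\mathbf{c}_k\in\mathbb{C}^M$ is the combining vector for device $k$. Define (all expectations over channels, pilot noise and data noise) $\mathrm{Ds}_k=\mathbb{E}\{\sqrt{\rho p^d_k}\,\Phi\,\mathbf{c}_k^H\mathbf{D}\mathbf{h}_k\}$, $|\mathrm{Ls}_k|^2=\mathbb{E}\{|\sqrt{\rho p^d_k}\,\Phi\,\mathbf{c}_k^H\mathbf{D}\mathbf{h}_k|^2\}-|\mathrm{Ds}_k|^2$, $|\mathrm{UI}_{k,k'}|^2=\mathbb{E}\{|\sqrt{\rho p^d_{k'}}\,\Phi\,\mathbf{c}_k^H\mathbf{D}\mathbf{h}_{k'}|^2\}$ for $k'\ne k$, $|\mathrm{N}_k|^2=\mathbb{E}\{|\mathbf{c}_k^H\mathbf{n}|^2\}$, and the uplink achievable rate $$R^U_k=\frac{T_U}{T}\log_2\!\Big(1+\frac{|\mathrm{Ds}_k|^2}{|\mathrm{Ls}_k|^2+\sum_{k'\neq k}|\mathrm{UI}_{k,k'}|^2+|\mathrm{N}_k|^2}\Big).$$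 *)

theory Defs
  imports "HOL-Probability.Probability"
begin

text \<open>Index set of the underlying independent real Gaussian variables:
  real/imaginary parts (bool flag: True = real part) of the channel entries h_k(i),
  of the pilot noise entries z_k(i), and of the data noise entries n(i).\<close>
datatype gidx = GH nat nat bool | GZ nat nat bool | GN nat bool

definition repart :: "bool \<Rightarrow> complex \<Rightarrow> real" where
  "repart b x = (if b then Re x else Im x)"

definition gaussian_family ::
  "(nat \<Rightarrow> nat \<Rightarrow> 'w \<Rightarrow> complex) \<Rightarrow> (nat \<Rightarrow> nat \<Rightarrow> 'w \<Rightarrow> complex) \<Rightarrow> (nat \<Rightarrow> 'w \<Rightarrow> complex)
    \<Rightarrow> gidx \<Rightarrow> 'w \<Rightarrow> real" where
  "gaussian_family h z n g = (case g of
      GH k i b \<Rightarrow> (\<lambda>w. repart b (h k i w))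
    | GZ k i b \<Rightarrow> (\<lambda>w. repart b (z k i w))
    | GN i b \<Rightarrow> (\<lambda>w. repart b (n i w)))"

definition gidx_set :: "nat \<Rightarrow> nat \<Rightarrow> gidx set" where
  "gidx_set M K =
     {GH k i b | k i b. k \<in> {1..K} \<and> i < M} \<union> {GZ k i b | k i b. k \<in> {1..K} \<and> i < M}
     \<union> {GN i b | i b. i < M}"

text \<open>Variance of each real component: CN(0,v) has independent real and imaginary
  parts, each N(0, v/2).\<close>
definition gidx_var :: "(nat \<Rightarrow> real) \<Rightarrow> real \<Rightarrow> gidx \<Rightarrow> real" where
  "gidx_var \<beta> \<sigma>2 g = (case g of GH k i b \<Rightarrow> \<beta> k / 2 | GZ k i b \<Rightarrow> \<sigma>2 / 2 | GN i b \<Rightarrow> \<sigma>2 / 2)"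

text \<open>MMSE channel estimate, entry i of hat h_k (tau is the pilot length).\<close>
definition mmse_est ::
  "real \<Rightarrow> real \<Rightarrow> real \<Rightarrow> complex \<Rightarrow> (nat \<Rightarrow> complex) \<Rightarrow> (nat \<Rightarrow> real) \<Rightarrow> (nat \<Rightarrow> real)
    \<Rightarrow> (nat \<Rightarrow> nat \<Rightarrow> 'w \<Rightarrow> complex) \<Rightarrow> (nat \<Rightarrow> nat \<Rightarrow> 'w \<Rightarrow> complex) \<Rightarrow> nat \<Rightarrow> nat \<Rightarrow> 'w \<Rightarrow> complex"
  where
  "mmse_est \<rho> \<tau> \<sigma>2 \<Phi> d \<beta> pp h z k i w =
     complex_of_real (\<rho> * \<beta> k * \<tau> * pp k * (cmod \<Phi>)\<^sup>2 / (\<rho> * \<beta> k * \<tau> * pp k * (cmod \<Phi>)\<^sup>2 + \<sigma>2))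
       * h k i w
   + complex_of_real (sqrt (\<rho> * \<tau> * pp k) * \<beta> k / (\<rho> * \<beta> k * \<tau> * pp k * (cmod \<Phi>)\<^sup>2 + \<sigma>2))
       * cnj \<Phi> * cnj (d i) * z k i w"

text \<open>Uplink achievable rate R^U_k for combining vectors c (c k i w = i-th entry of c_k).\<close>
definition uplink_rate ::
  "'w measure \<Rightarrow> nat \<Rightarrow> nat \<Rightarrow> nat \<Rightarrow> nat \<Rightarrow> complex \<Rightarrow> real \<Rightarrow> (nat \<Rightarrow> complex) \<Rightarrow> (nat \<Rightarrow> real)
    \<Rightarrow> (nat \<Rightarrow> nat \<Rightarrow> 'w \<Rightarrow> complex) \<Rightarrow> (nat \<Rightarrow> 'w \<Rightarrow> complex) \<Rightarrow> (nat \<Rightarrow> nat \<Rightarrow> 'w \<Rightarrow> complex)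
    \<Rightarrow> nat \<Rightarrow> real" where
  "uplink_rate P M K T TU \<Phi> \<rho> d pd h n c k =
    (let sig = (\<lambda>k' w. complex_of_real (sqrt (\<rho> * pd k')) * \<Phi>
                        * (\<Sum>i<M. cnj (c k i w) * d i * h k' i w));
         Ds = integral\<^sup>L P (sig k);
         Ls = integral\<^sup>L P (\<lambda>w. (cmod (sig k w))\<^sup>2) - (cmod Ds)\<^sup>2;
         UI = (\<Sum>k'\<in>{1..K} - {k}. integral\<^sup>L P (\<lambda>w. (cmod (sig k' w))\<^sup>2));
         N = integral\<^sup>L P (\<lambda>w. (cmod (\<Sum>i<M. cnj (c k i w) * n i w))\<^sup>2)
     in real TU / real T * log 2 (1 + (cmod Ds)\<^sup>2 / (Ls + UI + N)))"

end

theory Submission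
  imports Defs
begin

text \<open>With maximum ratio combining, every quantity in the rate is a sum over the M antennas of
  terms that involve only the Gaussian entries at one antenna, so these terms are independent
  across antennas and the second moment of the sum is M times the per-antenna variance plus the
  squared mean. The per-antenna moments follow from the circular symmetry of the complex Gaussian
  entries together with E|h|^4 = 2 beta^2. Writing the MMSE estimate as a_k h_k plus a multiple
  of the pilot noise, one gets E|hat h_k(i)|^2 = a_k beta_k, and then the desired signal, the
  leakage, the interference and the noise are all multiples of M a_k beta_k: the rate equals the
  stated bound exactly.\<close>

lemma borel_measurable_cnj [measurable]: "cnj \<in> borel_measurable borel"
  by (intro borel_measurable_continuous_onI continuous_intros)

lemma borel_measurable_Complex [measurable (raw)]:
  assumes "f \<in> borel_measurable M" "g \<in> borel_measurable M"
  shows "(\<lambda>x. Complex (f x) (g x)) \<in> borel_measurable M"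
  using assms by (simp add: borel_measurable_complex_iff)

lemma (in prob_space) indep_var_restrict_compose:
  assumes ind: "indep_vars M' X I" and AB: "A \<inter> B = {}" "A \<subseteq> I" "B \<subseteq> I"
    and F: "F \<in> measurable (PiM A M') N1" and G: "G \<in> measurable (PiM B M') N2"
  shows "indep_var N1 (\<lambda>w. F (\<lambda>i\<in>A. X i w)) N2 (\<lambda>w. G (\<lambda>i\<in>B. X i w))"
  using indep_var_compose[OF indep_var_restrict[OF ind AB] F G] by (simp add: comp_def)

lemma (in prob_space) indep_vars_restrict_compose:
  assumes ind: "indep_vars M' X I" and sub: "\<And>j. j \<in> L \<Longrightarrow> K j \<subseteq> I"
    and disj: "disjoint_family_on K L"
    and F: "\<And>j. j \<in> L \<Longrightarrow> F j \<in> measurable (PiM (K j) M') (N j)"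
  shows "indep_vars N (\<lambda>j w. F j (\<lambda>i\<in>K j. X i w)) L"
  using indep_vars_compose2[OF indep_vars_restrict[OF ind sub disj] F] by simp

lemma (in prob_space)
  fixes X :: "'i \<Rightarrow> 'a \<Rightarrow> real"
    and F G :: "('i \<Rightarrow> real) \<Rightarrow> 'c::{real_normed_field, banach, second_countable_topology}"
  assumes ind: "indep_vars (\<lambda>_. borel) X I" and AB: "A \<inter> B = {}" "A \<subseteq> I" "B \<subseteq> I"
    and F: "F \<in> borel_measurable (PiM A (\<lambda>_. borel))"
    and G: "G \<in> borel_measurable (PiM B (\<lambda>_. borel))"
    and iF: "integrable M (\<lambda>w. F (\<lambda>i\<in>A. X i w))" and iG: "integrable M (\<lambda>w. G (\<lambda>i\<in>B. X i w))"
  shows integral_mult_indep_restrict: "integral\<^sup>L M (\<lambda>w. F (\<lambda>i\<in>A. X i w) * G (\<lambda>i\<in>B. X i w)) =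
           integral\<^sup>L M (\<lambda>w. F (\<lambda>i\<in>A. X i w)) * integral\<^sup>L M (\<lambda>w. G (\<lambda>i\<in>B. X i w))"
    and integrable_mult_indep_restrict: "integrable M (\<lambda>w. F (\<lambda>i\<in>A. X i w) * G (\<lambda>i\<in>B. X i w))"
  using indep_var_lebesgue_integral[OF indep_var_restrict_compose[OF ind AB F G] iF iG]
        indep_var_integrable[OF indep_var_restrict_compose[OF ind AB F G] iF iG] by auto

lemma (in prob_space) integral_cmod_sum_indep_square:
  fixes Y :: "nat \<Rightarrow> 'a \<Rightarrow> complex"
  assumes ind: "indep_vars (\<lambda>_. borel) Y {..<m}"
    and int: "\<And>i. i < m \<Longrightarrow> integrable M (Y i)"
    and int2: "\<And>i. i < m \<Longrightarrow> integrable M (\<lambda>w. Y i w * cnj (Y i w))"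
    and mean: "\<And>i. i < m \<Longrightarrow> integral\<^sup>L M (Y i) = \<mu>"
    and second: "\<And>i. i < m \<Longrightarrow> integral\<^sup>L M (\<lambda>w. Y i w * cnj (Y i w)) = of_real s"
  shows "integral\<^sup>L M (\<lambda>w. (cmod (\<Sum>i<m. Y i w))\<^sup>2) = m * (s - (cmod \<mu>)\<^sup>2) + (m * cmod \<mu>)\<^sup>2"
proof -
  define c where "c i j = (if i = j then of_real (s - (cmod \<mu>)\<^sup>2) else 0) + \<mu> * cnj \<mu>"
    for i j :: nat
  have pair: "integrable M (\<lambda>w. Y i w * cnj (Y j w)) \<and> integral\<^sup>L M (\<lambda>w. Y i w * cnj (Y j w)) = c i j"
    if "i < m" "j < m" for i j
  proof (cases "i = j")
    case True
    then show ?thesis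
      using int2 second that by (simp add: c_def flip: complex_norm_square)
  next
    case False
    have "indep_var borel (\<lambda>w. (\<lambda>f. f i) (\<lambda>l\<in>{i}. Y l w)) borel (\<lambda>w. (\<lambda>f. cnj (f j)) (\<lambda>l\<in>{j}. Y l w))"
      by (rule indep_var_restrict_compose[OF ind]) (use that False in auto)
    then have iv: "indep_var borel (Y i) borel (\<lambda>w. cnj (Y j w))"
      by simp
    show ?thesis
      using indep_var_lebesgue_integral[OF iv] indep_var_integrable[OF iv] int mean that False
      by (simp add: c_def)
  qed
  have "complex_of_real (integral\<^sup>L M (\<lambda>w. (cmod (\<Sum>i<m. Y i w))\<^sup>2))
      = integral\<^sup>L M (\<lambda>w. complex_of_real ((cmod (\<Sum>i<m. Y i w))\<^sup>2))"
    by (rule integral_complex_of_real[symmetric])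
  also have "\<dots> = integral\<^sup>L M (\<lambda>w. \<Sum>i<m. \<Sum>j<m. Y i w * cnj (Y j w))"
    by (simp only: complex_norm_square sum_product cnj_sum)
  also have "\<dots> = (\<Sum>i<m. \<Sum>j<m. integral\<^sup>L M (\<lambda>w. Y i w * cnj (Y j w)))"
    using pair by (subst Bochner_Integration.integral_sum)
      (auto intro!: sum.cong Bochner_Integration.integral_sum)
  also have "\<dots> = (\<Sum>i<m. \<Sum>j<m. c i j)"
    using pair by (auto intro!: sum.cong)
  also have "\<dots> = of_real (m * (s - (cmod \<mu>)\<^sup>2) + (m * cmod \<mu>)\<^sup>2)"
    by (simp add: c_def sum.distrib power_mult_distrib algebra_simps power2_eq_square
        flip: complex_norm_square)
  finally show ?thesis
    by (simp only: of_real_eq_iff)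
qed

lemma (in prob_space) normal_moments:
  fixes X :: "'a \<Rightarrow> real"
  assumes X: "distributed M lborel X (\<lambda>x. ennreal (normal_density 0 (sqrt v) x))" and v: "v > 0"
  shows "integrable M (\<lambda>w. X w ^ p)"
    and "integral\<^sup>L M X = 0" and "integral\<^sup>L M (\<lambda>w. X w ^ 2) = v"
    and "integral\<^sup>L M (\<lambda>w. X w ^ 3) = 0" and "integral\<^sup>L M (\<lambda>w. X w ^ 4) = 3 * v\<^sup>2"
proof -
  have s: "sqrt v > 0"
    using v by simp
  have moment: "integral\<^sup>L M (\<lambda>w. X w ^ p) = integral\<^sup>L lborel (\<lambda>x. normal_density 0 (sqrt v) x * x ^ p)"
    for p
    using distributed_integral[OF X, of "\<lambda>x. x ^ p"] by simp
  show "integrable M (\<lambda>w. X w ^ p)"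
    using distributed_integrable[OF X, of "\<lambda>x. x ^ p"] integrable_normal_moment[OF s, of 0 p] by simp
  show "integral\<^sup>L M X = 0"
    using moment[of 1] integral_normal_moment_odd[OF s, of 0 0] by simp
  show "integral\<^sup>L M (\<lambda>w. X w ^ 2) = v"
    using moment[of 2] integral_normal_moment_even[OF s, of 0 1] v by simp
  show "integral\<^sup>L M (\<lambda>w. X w ^ 3) = 0"
    using moment[of 3] integral_normal_moment_odd[OF s, of 0 1] by (simp add: numeral_eq_Suc)
  show "integral\<^sup>L M (\<lambda>w. X w ^ 4) = 3 * v\<^sup>2"
    using moment[of 4] integral_normal_moment_even[OF s, of 0 2] v
    by (simp add: fact_numeral power2_eq_square)
qed

lemma (in prob_space) circular_normal_moments:
  fixes X Y :: "'a \<Rightarrow> real"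
  assumes X: "distributed M lborel X (\<lambda>x. ennreal (normal_density 0 (sqrt v) x))"
    and Y: "distributed M lborel Y (\<lambda>x. ennreal (normal_density 0 (sqrt v) x))"
    and ind: "indep_var borel X borel Y" and v: "v > 0"
  defines "Z \<equiv> \<lambda>w. Complex (X w) (Y w)"
  shows "integrable M Z" and "integral\<^sup>L M Z = 0"
    and "integrable M (\<lambda>w. Z w * cnj (Z w))"
    and "integral\<^sup>L M (\<lambda>w. Z w * cnj (Z w)) = of_real (2 * v)"
    and "integrable M (\<lambda>w. (Z w * cnj (Z w)) * (Z w * cnj (Z w)))"
    and "integral\<^sup>L M (\<lambda>w. (Z w * cnj (Z w)) * (Z w * cnj (Z w))) = of_real (8 * v\<^sup>2)"
    and "integrable M (\<lambda>w. (Z w * cnj (Z w)) * Z w)"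
    and "integrable M (\<lambda>w. (Z w * cnj (Z w)) * cnj (Z w))"
proof -
  note mX = normal_moments[OF X v] and mY = normal_moments[OF Y v]
  have indp: "indep_var borel (\<lambda>w. X w ^ p) borel (\<lambda>w. Y w ^ q)" for p q
    using indep_var_compose[OF ind, of "\<lambda>x. x ^ p" borel "\<lambda>x. x ^ q" borel] by (simp add: comp_def)
  have iXY: "integrable M (\<lambda>w. X w ^ p * Y w ^ q)" for p q
    using indep_var_integrable[OF indp mX(1) mY(1)] .
  have eXY: "integral\<^sup>L M (\<lambda>w. X w ^ p * Y w ^ q)
      = integral\<^sup>L M (\<lambda>w. X w ^ p) * integral\<^sup>L M (\<lambda>w. Y w ^ q)" for p q
    using indep_var_lebesgue_integral[OF indp mX(1) mY(1)] .
  have iX1: "integrable M X" and iY1: "integrable M Y"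
    using mX(1)[of 1] mY(1)[of 1] by simp_all
  have Z: "Z = (\<lambda>w. of_real (X w) + \<i> * of_real (Y w))"
    by (simp add: Z_def fun_eq_iff complex_eq_iff)
  show "integrable M Z"
    unfolding Z using iX1 iY1 by (simp add: complex_of_real_integrable_eq)
  show "integral\<^sup>L M Z = 0"
    unfolding Z using iX1 iY1 mX(2) mY(2)
    by (subst Bochner_Integration.integral_add) (simp_all add: complex_of_real_integrable_eq)
  have Z2: "(\<lambda>w. Z w * cnj (Z w)) = (\<lambda>w. of_real (X w ^ 2 + Y w ^ 2))"
    by (simp add: Z_def fun_eq_iff complex_eq_iff power2_eq_square)
  show "integrable M (\<lambda>w. Z w * cnj (Z w))"
    unfolding Z2 complex_of_real_integrable_eq using mX(1) mY(1) by simp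
  show "integral\<^sup>L M (\<lambda>w. Z w * cnj (Z w)) = of_real (2 * v)"
    unfolding Z2 integral_complex_of_real using mX mY by simp
  have Z4: "(\<lambda>w. (Z w * cnj (Z w)) * (Z w * cnj (Z w)))
      = (\<lambda>w. of_real (X w ^ 4 + 2 * (X w ^ 2 * Y w ^ 2) + Y w ^ 4))"
    by (simp add: Z_def fun_eq_iff complex_eq_iff power2_eq_square) algebra
  show "integrable M (\<lambda>w. (Z w * cnj (Z w)) * (Z w * cnj (Z w)))"
    unfolding Z4 complex_of_real_integrable_eq using mX(1) mY(1) iXY by simp
  have "integral\<^sup>L M (\<lambda>w. X w ^ 4 + 2 * (X w ^ 2 * Y w ^ 2) + Y w ^ 4) = 3 * v\<^sup>2 + 2 * (v * v) + 3 * v\<^sup>2"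
    using mX mY iXY by (simp add: eXY)
  then show "integral\<^sup>L M (\<lambda>w. (Z w * cnj (Z w)) * (Z w * cnj (Z w))) = of_real (8 * v\<^sup>2)"
    unfolding Z4 integral_complex_of_real by (simp add: power2_eq_square)
  have i3: "integrable M (\<lambda>w. X w ^ 3 + X w * Y w ^ 2)" "integrable M (\<lambda>w. X w ^ 2 * Y w + Y w ^ 3)"
    using mX(1) mY(1) iXY[of 1 2] iXY[of 2 1] by simp_all
  have Z3: "(\<lambda>w. (Z w * cnj (Z w)) * Z w)
      = (\<lambda>w. of_real (X w ^ 3 + X w * Y w ^ 2) + \<i> * of_real (X w ^ 2 * Y w + Y w ^ 3))"
    by (simp add: Z_def fun_eq_iff complex_eq_iff power2_eq_square power3_eq_cube) algebra
  show iZ3: "integrable M (\<lambda>w. (Z w * cnj (Z w)) * Z w)"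
    unfolding Z3 using i3
    by (intro Bochner_Integration.integrable_add Bochner_Integration.integrable_mult_right)
       (simp_all only: complex_of_real_integrable_eq)
  show "integrable M (\<lambda>w. (Z w * cnj (Z w)) * cnj (Z w))"
    using integrable_cnj[OF iZ3] by (simp add: mult_ac)
qed

text \<open>These index sets are disjoint for distinct antennas, which makes the per-antenna terms of
  every combined signal independent.\<close>
definition antenna_gidx :: "nat \<Rightarrow> nat \<Rightarrow> nat \<Rightarrow> gidx set" where
  "antenna_gidx k k' i = {GH k i True, GH k i False, GZ k i True, GZ k i False,
     GH k' i True, GH k' i False, GN i True, GN i False}"

locale gaussian_channels = prob_space P for P :: "'w measure" +
  fixes M K :: nat and \<beta> :: "nat \<Rightarrow> real" and \<sigma>2 :: real
    and h z :: "nat \<Rightarrow> nat \<Rightarrow> 'w \<Rightarrow> complex" and n :: "nat \<Rightarrow> 'w \<Rightarrow> complex"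
  assumes noise_power_pos: "\<sigma>2 > 0" and large_scale_fading_pos: "\<forall>j\<in>{1..K}. \<beta> j > 0"
    and gaussian: "\<forall>g\<in>gidx_set M K. distributed P lborel (gaussian_family h z n g)
            (\<lambda>x. ennreal (normal_density 0 (sqrt (gidx_var \<beta> \<sigma>2 g)) x))"
    and indep: "indep_vars (\<lambda>_. borel) (gaussian_family h z n) (gidx_set M K)"
begin

abbreviation "X \<equiv> gaussian_family h z n"

lemma Complex_gaussian_family:
  "Complex (X (GH k i True) w) (X (GH k i False) w) = h k i w"
  "Complex (X (GZ k i True) w) (X (GZ k i False) w) = z k i w"
  "Complex (X (GN i True) w) (X (GN i False) w) = n i w"
  by (simp_all add: gaussian_family_def repart_def complex_eq_iff)

lemma gidx_set_memI:
  "k \<in> {1..K} \<Longrightarrow> i < M \<Longrightarrow> GH k i b \<in> gidx_set M K"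
  "k \<in> {1..K} \<Longrightarrow> i < M \<Longrightarrow> GZ k i b \<in> gidx_set M K"
  "i < M \<Longrightarrow> GN i b \<in> gidx_set M K"
  by (auto simp: gidx_set_def)

lemma gidx_var_pos: "g \<in> gidx_set M K \<Longrightarrow> gidx_var \<beta> \<sigma>2 g > 0"
  using noise_power_pos large_scale_fading_pos by (auto simp: gidx_set_def gidx_var_def)

lemma indep_var_entries:
  assumes "a \<in> gidx_set M K" "b \<in> gidx_set M K" "a \<noteq> b"
  shows "indep_var borel (X a) borel (X b)"
proof -
  have "indep_var borel (\<lambda>w. (\<lambda>f. f a) (\<lambda>g\<in>{a}. X g w)) borel (\<lambda>w. (\<lambda>f. f b) (\<lambda>g\<in>{b}. X g w))"
    by (rule indep_var_restrict_compose[OF indep]) (use assms in auto)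
  then show ?thesis
    by simp
qed

lemma circular_entry_moments:
  assumes a: "a \<in> gidx_set M K" and b: "b \<in> gidx_set M K" and "a \<noteq> b"
    and va: "gidx_var \<beta> \<sigma>2 a = v" and vb: "gidx_var \<beta> \<sigma>2 b = v"
  defines "Z \<equiv> \<lambda>w. Complex (X a w) (X b w)"
  shows "integrable P Z" and "integral\<^sup>L P Z = 0"
    and "integrable P (\<lambda>w. Z w * cnj (Z w))"
    and "integral\<^sup>L P (\<lambda>w. Z w * cnj (Z w)) = of_real (2 * v)"
    and "integrable P (\<lambda>w. (Z w * cnj (Z w)) * (Z w * cnj (Z w)))"
    and "integral\<^sup>L P (\<lambda>w. (Z w * cnj (Z w)) * (Z w * cnj (Z w))) = of_real (8 * v\<^sup>2)"
    and "integrable P (\<lambda>w. (Z w * cnj (Z w)) * Z w)"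
    and "integrable P (\<lambda>w. (Z w * cnj (Z w)) * cnj (Z w))"
  using circular_normal_moments[OF gaussian[rule_format, OF a, unfolded va]
      gaussian[rule_format, OF b, unfolded vb] indep_var_entries[OF assms(1-3)]
      gidx_var_pos[OF a, unfolded va]]
  unfolding Z_def by simp_all

lemma channel_moments:
  assumes "k \<in> {1..K}" "i < M"
  shows "integrable P (h k i)" "integral\<^sup>L P (h k i) = 0"
    "integrable P (\<lambda>w. h k i w * cnj (h k i w))"
    "integral\<^sup>L P (\<lambda>w. h k i w * cnj (h k i w)) = of_real (\<beta> k)"
    "integrable P (\<lambda>w. (h k i w * cnj (h k i w)) * (h k i w * cnj (h k i w)))"
    "integral\<^sup>L P (\<lambda>w. (h k i w * cnj (h k i w)) * (h k i w * cnj (h k i w))) = of_real (2 * (\<beta> k)\<^sup>2)"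
    "integrable P (\<lambda>w. (h k i w * cnj (h k i w)) * h k i w)"
    "integrable P (\<lambda>w. (h k i w * cnj (h k i w)) * cnj (h k i w))"
  using circular_entry_moments[of "GH k i True" "GH k i False" "\<beta> k / 2"] gidx_set_memI assms
  by (simp_all add: Complex_gaussian_family gidx_var_def power2_eq_square)

lemma pilot_noise_moments:
  assumes "k \<in> {1..K}" "i < M"
  shows "integrable P (z k i)" "integral\<^sup>L P (z k i) = 0"
    "integrable P (\<lambda>w. z k i w * cnj (z k i w))"
    "integral\<^sup>L P (\<lambda>w. z k i w * cnj (z k i w)) = of_real \<sigma>2"
  using circular_entry_moments[of "GZ k i True" "GZ k i False" "\<sigma>2 / 2"] gidx_set_memI assms
  by (simp_all add: Complex_gaussian_family gidx_var_def)

lemma data_noise_moments: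
  assumes "i < M"
  shows "integrable P (n i)" "integral\<^sup>L P (n i) = 0"
    "integrable P (\<lambda>w. n i w * cnj (n i w))"
    "integral\<^sup>L P (\<lambda>w. n i w * cnj (n i w)) = of_real \<sigma>2"
  using circular_entry_moments[of "GN i True" "GN i False" "\<sigma>2 / 2"] gidx_set_memI assms
  by (simp_all add: Complex_gaussian_family gidx_var_def)

lemma integral_mult_channel_pilot_noise:
  fixes \<phi> \<psi> :: "complex \<Rightarrow> complex"
  assumes k: "k \<in> {1..K}" and i: "i < M"
    and m: "\<phi> \<in> borel_measurable borel" "\<psi> \<in> borel_measurable borel"
    and int: "integrable P (\<lambda>w. \<phi> (h k i w))" "integrable P (\<lambda>w. \<psi> (z k i w))"
  shows "integral\<^sup>L P (\<lambda>w. \<phi> (h k i w) * \<psi> (z k i w))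
      = integral\<^sup>L P (\<lambda>w. \<phi> (h k i w)) * integral\<^sup>L P (\<lambda>w. \<psi> (z k i w))"
    and "integrable P (\<lambda>w. \<phi> (h k i w) * \<psi> (z k i w))"
proof -
  have F: "(\<lambda>f. \<phi> (Complex (f (GH k i True)) (f (GH k i False))))
      \<in> borel_measurable (PiM {GH k i True, GH k i False} (\<lambda>_. borel))"
    using m(1) by measurable
  have G: "(\<lambda>f. \<psi> (Complex (f (GZ k i True)) (f (GZ k i False))))
      \<in> borel_measurable (PiM {GZ k i True, GZ k i False} (\<lambda>_. borel))"
    using m(2) by measurable
  note r = integral_mult_indep_restrict[OF indep _ _ _ F G] integrable_mult_indep_restrict[OF indep _ _ _ F G]
  show "integral\<^sup>L P (\<lambda>w. \<phi> (h k i w) * \<psi> (z k i w))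
      = integral\<^sup>L P (\<lambda>w. \<phi> (h k i w)) * integral\<^sup>L P (\<lambda>w. \<psi> (z k i w))"
    and "integrable P (\<lambda>w. \<phi> (h k i w) * \<psi> (z k i w))"
    using r int gidx_set_memI k i by (simp_all add: Complex_gaussian_family)
qed

lemma integral_mult_estimate_indep:
  fixes \<phi> \<psi> :: "complex \<Rightarrow> complex" and A B :: complex
  assumes k: "k \<in> {1..K}" and i: "i < M"
    and c: "c1 \<in> gidx_set M K" "c2 \<in> gidx_set M K"
      "c1 \<notin> {GH k i True, GH k i False, GZ k i True, GZ k i False}"
      "c2 \<notin> {GH k i True, GH k i False, GZ k i True, GZ k i False}"
    and m: "\<phi> \<in> borel_measurable borel" "\<psi> \<in> borel_measurable borel"
    and int: "integrable P (\<lambda>w. \<phi> (A * h k i w + B * z k i w))"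
      "integrable P (\<lambda>w. \<psi> (Complex (X c1 w) (X c2 w)))"
  shows "integral\<^sup>L P (\<lambda>w. \<phi> (A * h k i w + B * z k i w) * \<psi> (Complex (X c1 w) (X c2 w)))
      = integral\<^sup>L P (\<lambda>w. \<phi> (A * h k i w + B * z k i w)) * integral\<^sup>L P (\<lambda>w. \<psi> (Complex (X c1 w) (X c2 w)))"
    and "integrable P (\<lambda>w. \<phi> (A * h k i w + B * z k i w) * \<psi> (Complex (X c1 w) (X c2 w)))"
proof -
  have F: "(\<lambda>f. \<phi> (A * Complex (f (GH k i True)) (f (GH k i False)) + B * Complex (f (GZ k i True)) (f (GZ k i False))))
      \<in> borel_measurable (PiM {GH k i True, GH k i False, GZ k i True, GZ k i False} (\<lambda>_. borel))"
    using m(1) by measurable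
  have G: "(\<lambda>f. \<psi> (Complex (f c1) (f c2))) \<in> borel_measurable (PiM {c1, c2} (\<lambda>_. borel))"
    using m(2) by measurable
  note r = integral_mult_indep_restrict[OF indep _ _ _ F G] integrable_mult_indep_restrict[OF indep _ _ _ F G]
  show "integral\<^sup>L P (\<lambda>w. \<phi> (A * h k i w + B * z k i w) * \<psi> (Complex (X c1 w) (X c2 w)))
      = integral\<^sup>L P (\<lambda>w. \<phi> (A * h k i w + B * z k i w)) * integral\<^sup>L P (\<lambda>w. \<psi> (Complex (X c1 w) (X c2 w)))"
    and "integrable P (\<lambda>w. \<phi> (A * h k i w + B * z k i w) * \<psi> (Complex (X c1 w) (X c2 w)))"
    using r int c gidx_set_memI k i by (simp_all add: Complex_gaussian_family)
qed

context
  fixes k i :: nat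
  assumes k: "k \<in> {1..K}" and i: "i < M"
begin

lemma channel_pilot_noise_cross_moments:
  shows "integrable P (\<lambda>w. h k i w * cnj (z k i w))" "integral\<^sup>L P (\<lambda>w. h k i w * cnj (z k i w)) = 0"
    "integrable P (\<lambda>w. cnj (h k i w) * z k i w)" "integral\<^sup>L P (\<lambda>w. cnj (h k i w) * z k i w) = 0"
    "integrable P (\<lambda>w. (h k i w * cnj (h k i w) * cnj (h k i w)) * z k i w)"
    "integral\<^sup>L P (\<lambda>w. (h k i w * cnj (h k i w) * cnj (h k i w)) * z k i w) = 0"
    "integrable P (\<lambda>w. (h k i w * cnj (h k i w) * h k i w) * cnj (z k i w))"
    "integral\<^sup>L P (\<lambda>w. (h k i w * cnj (h k i w) * h k i w) * cnj (z k i w)) = 0"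
    "integrable P (\<lambda>w. (h k i w * cnj (h k i w)) * (z k i w * cnj (z k i w)))"
    "integral\<^sup>L P (\<lambda>w. (h k i w * cnj (h k i w)) * (z k i w * cnj (z k i w))) = of_real (\<beta> k * \<sigma>2)"
proof -
  note H = channel_moments[OF k i] and Z = pilot_noise_moments[OF k i]
  note indep_hz = integral_mult_channel_pilot_noise[OF k i]
  have m: "(\<lambda>x::complex. x) \<in> borel_measurable borel" "cnj \<in> borel_measurable borel"
    "(\<lambda>x::complex. x * cnj x * cnj x) \<in> borel_measurable borel"
    "(\<lambda>x::complex. x * cnj x * x) \<in> borel_measurable borel"
    "(\<lambda>x::complex. x * cnj x) \<in> borel_measurable borel"
    by simp_all
  show "integrable P (\<lambda>w. h k i w * cnj (z k i w))" "integral\<^sup>L P (\<lambda>w. h k i w * cnj (z k i w)) = 0"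
    using indep_hz[OF m(1,2)] H(1) Z(1,2) by auto
  show "integrable P (\<lambda>w. cnj (h k i w) * z k i w)" "integral\<^sup>L P (\<lambda>w. cnj (h k i w) * z k i w) = 0"
    using indep_hz[OF m(2,1)] H(1) Z(1,2) by auto
  show "integrable P (\<lambda>w. (h k i w * cnj (h k i w) * cnj (h k i w)) * z k i w)"
    "integral\<^sup>L P (\<lambda>w. (h k i w * cnj (h k i w) * cnj (h k i w)) * z k i w) = 0"
    using indep_hz[OF m(3,1)] H(8) Z(1,2) by auto
  show "integrable P (\<lambda>w. (h k i w * cnj (h k i w) * h k i w) * cnj (z k i w))"
    "integral\<^sup>L P (\<lambda>w. (h k i w * cnj (h k i w) * h k i w) * cnj (z k i w)) = 0"
    using indep_hz[OF m(4,2)] H(7) Z(1,2) by auto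
  show "integrable P (\<lambda>w. (h k i w * cnj (h k i w)) * (z k i w * cnj (z k i w)))"
    "integral\<^sup>L P (\<lambda>w. (h k i w * cnj (h k i w)) * (z k i w * cnj (z k i w))) = of_real (\<beta> k * \<sigma>2)"
    using indep_hz[OF m(5,5)] H(3,4) Z(3,4) by auto
qed

lemma estimate_moments:
  fixes A B :: complex
  shows "integrable P (\<lambda>w. A * h k i w + B * z k i w)"
    "integral\<^sup>L P (\<lambda>w. A * h k i w + B * z k i w) = 0"
    "integrable P (\<lambda>w. (A * h k i w + B * z k i w) * cnj (A * h k i w + B * z k i w))"
    "integral\<^sup>L P (\<lambda>w. (A * h k i w + B * z k i w) * cnj (A * h k i w + B * z k i w))
       = of_real ((cmod A)\<^sup>2 * \<beta> k + (cmod B)\<^sup>2 * \<sigma>2)"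
proof -
  note H = channel_moments[OF k i] and Z = pilot_noise_moments[OF k i]
    and C = channel_pilot_noise_cross_moments
  show "integrable P (\<lambda>w. A * h k i w + B * z k i w)"
    "integral\<^sup>L P (\<lambda>w. A * h k i w + B * z k i w) = 0"
    using H(1,2) Z(1,2) by auto
  have e: "(\<lambda>w. (A * h k i w + B * z k i w) * cnj (A * h k i w + B * z k i w)) =
    (\<lambda>w. (A * cnj A) * (h k i w * cnj (h k i w)) + (A * cnj B) * (h k i w * cnj (z k i w))
        + (B * cnj A) * (cnj (h k i w) * z k i w) + (B * cnj B) * (z k i w * cnj (z k i w)))"
    by (simp add: fun_eq_iff algebra_simps)
  show "integrable P (\<lambda>w. (A * h k i w + B * z k i w) * cnj (A * h k i w + B * z k i w))"
    unfolding e using H(3) Z(3) C(1,3) by simp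
  have "integral\<^sup>L P (\<lambda>w. (A * h k i w + B * z k i w) * cnj (A * h k i w + B * z k i w))
      = (A * cnj A) * of_real (\<beta> k) + (B * cnj B) * of_real \<sigma>2"
    unfolding e using H(3,4) Z(3,4) C(1-4) by (simp add: Bochner_Integration.integral_add)
  then show "integral\<^sup>L P (\<lambda>w. (A * h k i w + B * z k i w) * cnj (A * h k i w + B * z k i w))
       = of_real ((cmod A)\<^sup>2 * \<beta> k + (cmod B)\<^sup>2 * \<sigma>2)"
    by (simp flip: complex_norm_square)
qed

lemma estimate_own_channel_moments:
  fixes A B :: complex
  shows "integrable P (\<lambda>w. cnj (A * h k i w + B * z k i w) * h k i w)"
    "integral\<^sup>L P (\<lambda>w. cnj (A * h k i w + B * z k i w) * h k i w) = cnj A * of_real (\<beta> k)"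
    "integrable P (\<lambda>w. (cnj (A * h k i w + B * z k i w) * h k i w)
        * cnj (cnj (A * h k i w + B * z k i w) * h k i w))"
    "integral\<^sup>L P (\<lambda>w. (cnj (A * h k i w + B * z k i w) * h k i w)
        * cnj (cnj (A * h k i w + B * z k i w) * h k i w))
       = of_real (2 * (cmod A)\<^sup>2 * (\<beta> k)\<^sup>2 + (cmod B)\<^sup>2 * \<beta> k * \<sigma>2)"
proof -
  note H = channel_moments[OF k i] and C = channel_pilot_noise_cross_moments
  have e1: "(\<lambda>w. cnj (A * h k i w + B * z k i w) * h k i w) =
     (\<lambda>w. cnj A * (h k i w * cnj (h k i w)) + cnj B * (h k i w * cnj (z k i w)))"
    by (simp add: fun_eq_iff algebra_simps)
  show "integrable P (\<lambda>w. cnj (A * h k i w + B * z k i w) * h k i w)"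
    unfolding e1 using H(3) C(1) by simp
  show "integral\<^sup>L P (\<lambda>w. cnj (A * h k i w + B * z k i w) * h k i w) = cnj A * of_real (\<beta> k)"
    unfolding e1 using H(3,4) C(1,2) by simp
  have e2: "(\<lambda>w. (cnj (A * h k i w + B * z k i w) * h k i w) * cnj (cnj (A * h k i w + B * z k i w) * h k i w)) =
    (\<lambda>w. (A * cnj A) * ((h k i w * cnj (h k i w)) * (h k i w * cnj (h k i w)))
       + (cnj A * B) * ((h k i w * cnj (h k i w) * cnj (h k i w)) * z k i w)
       + (A * cnj B) * ((h k i w * cnj (h k i w) * h k i w) * cnj (z k i w))
       + (B * cnj B) * ((h k i w * cnj (h k i w)) * (z k i w * cnj (z k i w))))"
    by (simp add: fun_eq_iff algebra_simps)
  show "integrable P (\<lambda>w. (cnj (A * h k i w + B * z k i w) * h k i w)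
        * cnj (cnj (A * h k i w + B * z k i w) * h k i w))"
    unfolding e2 using H(5) C(5,7,9) by simp
  have "integral\<^sup>L P (\<lambda>w. (cnj (A * h k i w + B * z k i w) * h k i w)
        * cnj (cnj (A * h k i w + B * z k i w) * h k i w))
      = (A * cnj A) * of_real (2 * (\<beta> k)\<^sup>2) + (B * cnj B) * of_real (\<beta> k * \<sigma>2)"
    unfolding e2 using H(5,6) C(5-10) by (simp add: Bochner_Integration.integral_add)
  then show "integral\<^sup>L P (\<lambda>w. (cnj (A * h k i w + B * z k i w) * h k i w)
        * cnj (cnj (A * h k i w + B * z k i w) * h k i w))
       = of_real (2 * (cmod A)\<^sup>2 * (\<beta> k)\<^sup>2 + (cmod B)\<^sup>2 * \<beta> k * \<sigma>2)"
    by (simp add: algebra_simps flip: complex_norm_square)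
qed

lemma estimate_times_independent_moments:
  fixes A B :: complex
  assumes c: "c1 \<in> gidx_set M K" "c2 \<in> gidx_set M K"
      "c1 \<notin> {GH k i True, GH k i False, GZ k i True, GZ k i False}"
      "c2 \<notin> {GH k i True, GH k i False, GZ k i True, GZ k i False}"
    and W: "\<And>w. W w = Complex (X c1 w) (X c2 w)"
    and W_moments: "integrable P W" "integral\<^sup>L P W = 0"
      "integrable P (\<lambda>w. W w * cnj (W w))" "integral\<^sup>L P (\<lambda>w. W w * cnj (W w)) = of_real v"
  shows "integrable P (\<lambda>w. cnj (A * h k i w + B * z k i w) * W w)"
    "integral\<^sup>L P (\<lambda>w. cnj (A * h k i w + B * z k i w) * W w) = 0"
    "integrable P (\<lambda>w. (cnj (A * h k i w + B * z k i w) * W w) * cnj (cnj (A * h k i w + B * z k i w) * W w))"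
    "integral\<^sup>L P (\<lambda>w. (cnj (A * h k i w + B * z k i w) * W w) * cnj (cnj (A * h k i w + B * z k i w) * W w))
       = of_real (((cmod A)\<^sup>2 * \<beta> k + (cmod B)\<^sup>2 * \<sigma>2) * v)"
proof -
  note E = estimate_moments[of A B]
  have m: "(\<lambda>x::complex. x) \<in> borel_measurable borel" "cnj \<in> borel_measurable borel"
    "(\<lambda>x::complex. x * cnj x) \<in> borel_measurable borel"
    by simp_all
  have W': "W = (\<lambda>w. Complex (X c1 w) (X c2 w))"
    using W by auto
  note first = integral_mult_estimate_indep[OF k i c m(2,1), of A B]
  note second = integral_mult_estimate_indep[OF k i c m(3,3), of A B]
  show "integrable P (\<lambda>w. cnj (A * h k i w + B * z k i w) * W w)"
    "integral\<^sup>L P (\<lambda>w. cnj (A * h k i w + B * z k i w) * W w) = 0"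
    using first E(1) integrable_cnj[OF E(1)] W_moments(1,2) unfolding W' by simp_all
  have e: "(\<lambda>w. (cnj (A * h k i w + B * z k i w) * W w) * cnj (cnj (A * h k i w + B * z k i w) * W w))
     = (\<lambda>w. ((A * h k i w + B * z k i w) * cnj (A * h k i w + B * z k i w)) * (W w * cnj (W w)))"
    by (simp add: fun_eq_iff mult_ac)
  show "integrable P (\<lambda>w. (cnj (A * h k i w + B * z k i w) * W w) * cnj (cnj (A * h k i w + B * z k i w) * W w))"
    "integral\<^sup>L P (\<lambda>w. (cnj (A * h k i w + B * z k i w) * W w) * cnj (cnj (A * h k i w + B * z k i w) * W w))
       = of_real (((cmod A)\<^sup>2 * \<beta> k + (cmod B)\<^sup>2 * \<sigma>2) * v)"
    unfolding e using second E(3,4) W_moments(3,4) unfolding W' by simp_all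
qed

end

lemma indep_vars_antennas:
  fixes Y :: "nat \<Rightarrow> 'w \<Rightarrow> complex"
  assumes k: "k \<in> {1..K}" "k' \<in> {1..K}"
    and F: "\<And>i. i < M \<Longrightarrow> F i \<in> borel_measurable (PiM (antenna_gidx k k' i) (\<lambda>_. borel))"
    and Y: "\<And>i w. i < M \<Longrightarrow> Y i w = F i (\<lambda>g\<in>antenna_gidx k k' i. X g w)"
  shows "indep_vars (\<lambda>_. borel) Y {..<M}"
proof -
  have "indep_vars (\<lambda>_. borel) (\<lambda>i w. F i (\<lambda>g\<in>antenna_gidx k k' i. X g w)) {..<M}"
  proof (rule indep_vars_restrict_compose[OF indep])
    show "antenna_gidx k k' i \<subseteq> gidx_set M K" if "i \<in> {..<M}" for i
      using that k gidx_set_memI by (auto simp: antenna_gidx_def)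
    show "disjoint_family_on (antenna_gidx k k') {..<M}"
      by (auto simp: disjoint_family_on_def antenna_gidx_def)
  qed (use F in auto)
  then show ?thesis
    by (rule indep_vars_cong[THEN iffD1, rotated -1]) (auto simp: Y fun_eq_iff)
qed

lemma indep_vars_estimate_channel:
  fixes A :: complex and B :: "nat \<Rightarrow> complex"
  assumes k: "k \<in> {1..K}" "k' \<in> {1..K}"
  shows "indep_vars (\<lambda>_. borel) (\<lambda>i w. cnj (A * h k i w + B i * z k i w) * h k' i w) {..<M}"
proof (rule indep_vars_antennas[OF k])
  let ?F = "\<lambda>i f. cnj (A * Complex (f (GH k i True)) (f (GH k i False))
      + B i * Complex (f (GZ k i True)) (f (GZ k i False))) * Complex (f (GH k' i True)) (f (GH k' i False))"
  show "?F i \<in> borel_measurable (PiM (antenna_gidx k k' i) (\<lambda>_. borel))" for i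
    unfolding antenna_gidx_def by measurable
  show "cnj (A * h k i w + B i * z k i w) * h k' i w = ?F i (\<lambda>g\<in>antenna_gidx k k' i. X g w)" for i w
    by (simp add: antenna_gidx_def Complex_gaussian_family)
qed

lemma indep_vars_estimate_noise:
  fixes A :: complex and B C :: "nat \<Rightarrow> complex"
  assumes k: "k \<in> {1..K}"
  shows "indep_vars (\<lambda>_. borel) (\<lambda>i w. cnj (C i * (A * h k i w + B i * z k i w)) * n i w) {..<M}"
proof (rule indep_vars_antennas[OF k k])
  let ?F = "\<lambda>i f. cnj (C i * (A * Complex (f (GH k i True)) (f (GH k i False))
      + B i * Complex (f (GZ k i True)) (f (GZ k i False)))) * Complex (f (GN i True)) (f (GN i False))"
  show "?F i \<in> borel_measurable (PiM (antenna_gidx k k i) (\<lambda>_. borel))" for i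
    unfolding antenna_gidx_def by measurable
  show "cnj (C i * (A * h k i w + B i * z k i w)) * n i w = ?F i (\<lambda>g\<in>antenna_gidx k k i. X g w)" for i w
    by (simp add: antenna_gidx_def Complex_gaussian_family)
qed


end

locale mrc_uplink = gaussian_channels P M K \<beta> \<sigma>2 h z n
  for P :: "'w measure" and M K \<beta> \<sigma>2 h z n +
  fixes \<Phi> :: complex and \<rho> :: real and d :: "nat \<Rightarrow> complex" and pp pd :: "nat \<Rightarrow> real"
  assumes \<Phi>_nonzero: "\<Phi> \<noteq> 0" and \<rho>_pos: "\<rho> > 0"
    and unimodular: "\<forall>i<M. cmod (d i) = 1"
    and transmit_powers: "\<forall>j\<in>{1..K}. pp j > 0 \<and> pd j \<ge> 0"
begin

definition mmse_gain :: "nat \<Rightarrow> real" where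
  "mmse_gain j = \<rho> * \<beta> j * K * pp j * (cmod \<Phi>)\<^sup>2 / (\<rho> * \<beta> j * K * pp j * (cmod \<Phi>)\<^sup>2 + \<sigma>2)"

definition pilot_noise_gain :: "nat \<Rightarrow> nat \<Rightarrow> complex" where
  "pilot_noise_gain j i = of_real (sqrt (\<rho> * K * pp j) * \<beta> j / (\<rho> * \<beta> j * K * pp j * (cmod \<Phi>)\<^sup>2 + \<sigma>2))
     * cnj \<Phi> * cnj (d i)"

abbreviation est :: "nat \<Rightarrow> nat \<Rightarrow> 'w \<Rightarrow> complex" where
  "est j i w \<equiv> mmse_est \<rho> (real K) \<sigma>2 \<Phi> d \<beta> pp h z j i w"

lemma mmse_est_eq: "est j i w = of_real (mmse_gain j) * h j i w + pilot_noise_gain j i * z j i w"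
  by (simp add: mmse_est_def mmse_gain_def pilot_noise_gain_def)

lemma estimate_power:
  assumes j: "j \<in> {1..K}" and i: "i < M"
  shows "(mmse_gain j)\<^sup>2 * \<beta> j + (cmod (pilot_noise_gain j i))\<^sup>2 * \<sigma>2 = mmse_gain j * \<beta> j"
proof -
  define q where "q = (cmod \<Phi>)\<^sup>2"
  define D where "D = \<rho> * \<beta> j * K * pp j * q + \<sigma>2"
  have pos: "\<beta> j > 0" "pp j > 0" "K > 0" "q > 0"
    using j large_scale_fading_pos transmit_powers \<Phi>_nonzero by (auto simp: q_def)
  then have "D > 0"
    using \<rho>_pos noise_power_pos by (simp add: D_def add_pos_pos)
  have "cmod (pilot_noise_gain j i) = sqrt (\<rho> * K * pp j) * \<beta> j / D * cmod \<Phi>"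
    unfolding pilot_noise_gain_def norm_mult norm_of_real complex_mod_cnj
    using i unimodular \<rho>_pos pos \<open>D > 0\<close> by (simp add: D_def q_def)
  then have "(cmod (pilot_noise_gain j i))\<^sup>2 = \<rho> * K * pp j * (\<beta> j)\<^sup>2 / D\<^sup>2 * q"
    using \<rho>_pos pos by (simp add: power_mult_distrib power_divide q_def)
  then have "(mmse_gain j)\<^sup>2 * \<beta> j + (cmod (pilot_noise_gain j i))\<^sup>2 * \<sigma>2
      = \<rho> * K * pp j * (\<beta> j)\<^sup>2 * q * D / D\<^sup>2"
    using \<open>D > 0\<close> unfolding mmse_gain_def q_def[symmetric] D_def[symmetric]
    by (simp add: field_simps power2_eq_square) (simp add: D_def algebra_simps)
  also have "\<dots> = mmse_gain j * \<beta> j"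
    using \<open>D > 0\<close> unfolding mmse_gain_def q_def[symmetric] D_def[symmetric]
    by (simp add: power2_eq_square)
  finally show ?thesis .
qed

lemma mmse_gain_pos: "j \<in> {1..K} \<Longrightarrow> mmse_gain j > 0"
  using large_scale_fading_pos transmit_powers \<rho>_pos noise_power_pos \<Phi>_nonzero
  by (auto simp: mmse_gain_def intro!: divide_pos_pos add_pos_pos mult_pos_pos)

context
  fixes k :: nat
  assumes k: "k \<in> {1..K}"
begin

lemma mean_mrc_channel:
  "integral\<^sup>L P (\<lambda>w. \<Sum>i<M. cnj (est k i w) * h k i w) = of_real (M * (mmse_gain k * \<beta> k))"
proof -
  note Y = estimate_own_channel_moments[OF k _, of _ "of_real (mmse_gain k)" "pilot_noise_gain k _"]
  have "integral\<^sup>L P (\<lambda>w. \<Sum>i<M. cnj (est k i w) * h k i w)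
      = (\<Sum>i<M. integral\<^sup>L P (\<lambda>w. cnj (est k i w) * h k i w))"
    by (rule Bochner_Integration.integral_sum) (use Y(1) in \<open>simp add: mmse_est_eq\<close>)
  also have "\<dots> = (\<Sum>i<M. of_real (mmse_gain k * \<beta> k))"
    using Y(2) by (simp add: mmse_est_eq)
  finally show ?thesis
    by simp
qed

lemma second_moment_mrc_channel:
  "integral\<^sup>L P (\<lambda>w. (cmod (\<Sum>i<M. cnj (est k i w) * h k i w))\<^sup>2)
     = M * (mmse_gain k * (\<beta> k)\<^sup>2) + (M * (mmse_gain k * \<beta> k))\<^sup>2"
proof -
  let ?a = "mmse_gain k"
  let ?Y = "\<lambda>i w. cnj (of_real ?a * h k i w + pilot_noise_gain k i * z k i w) * h k i w"
  have "integral\<^sup>L P (\<lambda>w. (cmod (\<Sum>i<M. ?Y i w))\<^sup>2)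
      = M * (((?a * \<beta> k)\<^sup>2 + ?a * (\<beta> k)\<^sup>2) - (cmod (complex_of_real (?a * \<beta> k)))\<^sup>2)
        + (M * cmod (complex_of_real (?a * \<beta> k)))\<^sup>2"
  proof (rule integral_cmod_sum_indep_square[OF indep_vars_estimate_channel[OF k k]])
    fix i assume i: "i < M"
    note Y = estimate_own_channel_moments[OF k i, of "of_real ?a" "pilot_noise_gain k i"]
    have "\<beta> k * (?a\<^sup>2 * \<beta> k + (cmod (pilot_noise_gain k i))\<^sup>2 * \<sigma>2) = \<beta> k * (?a * \<beta> k)"
      using estimate_power[OF k i] by simp
    then have "2 * ?a\<^sup>2 * (\<beta> k)\<^sup>2 + (cmod (pilot_noise_gain k i))\<^sup>2 * \<beta> k * \<sigma>2
        = (?a * \<beta> k)\<^sup>2 + ?a * (\<beta> k)\<^sup>2"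
      by (simp add: algebra_simps power2_eq_square)
    then show "integral\<^sup>L P (\<lambda>w. ?Y i w * cnj (?Y i w)) = of_real ((?a * \<beta> k)\<^sup>2 + ?a * (\<beta> k)\<^sup>2)"
      using Y(4) by simp
    show "integrable P (?Y i)" "integrable P (\<lambda>w. ?Y i w * cnj (?Y i w))"
      using Y(1,3) .
    show "integral\<^sup>L P (?Y i) = of_real (?a * \<beta> k)"
      using Y(2) by simp
  qed
  then show ?thesis
    using mmse_gain_pos[OF k] large_scale_fading_pos k
    by (simp add: mmse_est_eq norm_mult power_mult_distrib algebra_simps)
qed

lemma second_moment_mrc_interference:
  assumes k': "k' \<in> {1..K}" "k' \<noteq> k"
  shows "integral\<^sup>L P (\<lambda>w. (cmod (\<Sum>i<M. cnj (est k i w) * h k' i w))\<^sup>2)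
     = M * (mmse_gain k * \<beta> k * \<beta> k')"
proof -
  let ?Y = "\<lambda>i w. cnj (of_real (mmse_gain k) * h k i w + pilot_noise_gain k i * z k i w) * h k' i w"
  have "integral\<^sup>L P (\<lambda>w. (cmod (\<Sum>i<M. ?Y i w))\<^sup>2)
      = M * (mmse_gain k * \<beta> k * \<beta> k' - (cmod (0::complex))\<^sup>2) + (M * cmod (0::complex))\<^sup>2"
  proof (rule integral_cmod_sum_indep_square[OF indep_vars_estimate_channel[OF k k'(1)]])
    fix i assume i: "i < M"
    have c: "GH k' i True \<in> gidx_set M K" "GH k' i False \<in> gidx_set M K"
      "GH k' i True \<notin> {GH k i True, GH k i False, GZ k i True, GZ k i False}"
      "GH k' i False \<notin> {GH k i True, GH k i False, GZ k i True, GZ k i False}"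
      using gidx_set_memI k' i by auto
    note Y = estimate_times_independent_moments[OF k i c Complex_gaussian_family(1)[symmetric]
        channel_moments(1-4)[OF k'(1) i], of "of_real (mmse_gain k)" "pilot_noise_gain k i"]
    show "integrable P (?Y i)" "integral\<^sup>L P (?Y i) = 0"
      "integrable P (\<lambda>w. ?Y i w * cnj (?Y i w))"
      using Y(1-3) by auto
    show "integral\<^sup>L P (\<lambda>w. ?Y i w * cnj (?Y i w)) = of_real (mmse_gain k * \<beta> k * \<beta> k')"
      using Y(4) estimate_power[OF k i] by simp
  qed
  then show ?thesis
    by (simp add: mmse_est_eq)
qed

lemma second_moment_mrc_noise:
  "integral\<^sup>L P (\<lambda>w. (cmod (\<Sum>i<M. cnj (\<Phi> * d i * est k i w) * n i w))\<^sup>2)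
     = M * ((cmod \<Phi>)\<^sup>2 * (mmse_gain k * \<beta> k) * \<sigma>2)"
proof -
  let ?Y = "\<lambda>i w. cnj ((\<Phi> * d i) * (of_real (mmse_gain k) * h k i w + pilot_noise_gain k i * z k i w)) * n i w"
  have "integral\<^sup>L P (\<lambda>w. (cmod (\<Sum>i<M. ?Y i w))\<^sup>2)
      = M * ((cmod \<Phi>)\<^sup>2 * (mmse_gain k * \<beta> k) * \<sigma>2 - (cmod (0::complex))\<^sup>2) + (M * cmod (0::complex))\<^sup>2"
  proof (rule integral_cmod_sum_indep_square[OF indep_vars_estimate_noise[OF k]])
    fix i assume i: "i < M"
    have c: "GN i True \<in> gidx_set M K" "GN i False \<in> gidx_set M K"
      "GN i True \<notin> {GH k i True, GH k i False, GZ k i True, GZ k i False}"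
      "GN i False \<notin> {GH k i True, GH k i False, GZ k i True, GZ k i False}"
      using gidx_set_memI i by auto
    note Y = estimate_times_independent_moments[OF k i c Complex_gaussian_family(3)[symmetric]
        data_noise_moments[OF i], of "of_real (mmse_gain k)" "pilot_noise_gain k i"]
    have Yi: "?Y i = (\<lambda>w. cnj (\<Phi> * d i) * (cnj (of_real (mmse_gain k) * h k i w + pilot_noise_gain k i * z k i w) * n i w))"
      by (simp add: fun_eq_iff)
    have Y2: "(\<lambda>w. ?Y i w * cnj (?Y i w)) = (\<lambda>w. (\<Phi> * d i * cnj (\<Phi> * d i)) *
        ((cnj (of_real (mmse_gain k) * h k i w + pilot_noise_gain k i * z k i w) * n i w)
        * cnj (cnj (of_real (mmse_gain k) * h k i w + pilot_noise_gain k i * z k i w) * n i w)))"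
      by (simp add: fun_eq_iff mult_ac)
    have "\<Phi> * d i * cnj (\<Phi> * d i) = of_real ((cmod (\<Phi> * d i))\<^sup>2)"
      by (simp only: complex_norm_square)
    also have "\<dots> = of_real ((cmod \<Phi>)\<^sup>2)"
      using unimodular i by (simp add: norm_mult)
    finally have "integral\<^sup>L P (\<lambda>w. ?Y i w * cnj (?Y i w))
        = of_real ((cmod \<Phi>)\<^sup>2) * of_real (((cmod (complex_of_real (mmse_gain k)))\<^sup>2 * \<beta> k
            + (cmod (pilot_noise_gain k i))\<^sup>2 * \<sigma>2) * \<sigma>2)"
      unfolding Y2 Bochner_Integration.integral_mult_right_zero Y(4) by simp
    then show "integral\<^sup>L P (\<lambda>w. ?Y i w * cnj (?Y i w))
        = of_real ((cmod \<Phi>)\<^sup>2 * (mmse_gain k * \<beta> k) * \<sigma>2)"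
      using estimate_power[OF k i] by simp
    show "integrable P (?Y i)" "integral\<^sup>L P (?Y i) = 0" "integrable P (\<lambda>w. ?Y i w * cnj (?Y i w))"
      unfolding Yi Y2 using Y(1-3) by auto
  qed
  then show ?thesis
    by (simp add: mmse_est_eq)
qed

lemma uplink_rate_mrc:
  assumes "M > 0"
  shows "uplink_rate P M K T TU \<Phi> \<rho> d pd h n (\<lambda>j i w. \<Phi> * d i * est j i w) k
      = real TU / real T * log 2 (1 +
          (real M * pd k * \<rho> * real K * pp k * (\<beta> k)\<^sup>2 * (cmod \<Phi>)\<^sup>2) /
          (((\<Sum>j=1..K. pd j * \<beta> j) + \<sigma>2 / ((cmod \<Phi>)\<^sup>2 * \<rho>))
            * (\<rho> * real K * pp k * \<beta> k * (cmod \<Phi>)\<^sup>2 + \<sigma>2)))"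
proof -
  define q where "q = (cmod \<Phi>)\<^sup>2"
  define g where "g = mmse_gain k * \<beta> k"
  define S where "S = (\<Sum>j=1..K. pd j * \<beta> j)"
  define D where "D = \<rho> * real K * pp k * \<beta> k * q + \<sigma>2"
  have q: "q > 0"
    using \<Phi>_nonzero by (simp add: q_def)
  have pos: "\<beta> k > 0" "pp k > 0" "pd k \<ge> 0"
    using k large_scale_fading_pos transmit_powers by auto
  have "K > 0"
    using k by simp
  have g: "g > 0"
    using mmse_gain_pos[OF k] pos by (simp add: g_def)
  have D: "D > 0"
    using pos q \<rho>_pos noise_power_pos \<open>K > 0\<close> by (simp add: D_def add_pos_pos)
  have S: "S \<ge> 0"
    using large_scale_fading_pos transmit_powers by (auto simp: S_def intro!: sum_nonneg)
  have sig: "complex_of_real (sqrt (\<rho> * pd j)) * \<Phi> * (\<Sum>i<M. cnj (\<Phi> * d i * est k i w) * d i * h j i w)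
      = of_real (sqrt (\<rho> * pd j) * q) * (\<Sum>i<M. cnj (est k i w) * h j i w)" for j w
  proof -
    have "(\<Sum>i<M. cnj (\<Phi> * d i * est k i w) * d i * h j i w) = cnj \<Phi> * (\<Sum>i<M. cnj (est k i w) * h j i w)"
      unfolding sum_distrib_left
    proof (rule sum.cong[OF refl])
      fix i assume "i \<in> {..<M}"
      then have "d i * cnj (d i) = 1"
        using unimodular complex_norm_square[of "d i"] by simp
      moreover have "cnj (\<Phi> * d i * est k i w) * d i * h j i w
          = (d i * cnj (d i)) * (cnj \<Phi> * (cnj (est k i w) * h j i w))"
        by (simp add: mult_ac)
      ultimately show "cnj (\<Phi> * d i * est k i w) * d i * h j i w = cnj \<Phi> * (cnj (est k i w) * h j i w)"
        by simp
    qed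
    moreover have "\<Phi> * cnj \<Phi> = of_real q"
      unfolding q_def by (rule complex_norm_square[symmetric])
    ultimately show ?thesis
      by (simp add: mult_ac flip: \<open>\<Phi> * cnj \<Phi> = of_real q\<close>)
  qed
  have scale: "integral\<^sup>L P (\<lambda>w. (cmod (of_real (sqrt (\<rho> * pd j) * q) * Y w))\<^sup>2)
      = \<rho> * pd j * q\<^sup>2 * integral\<^sup>L P (\<lambda>w. (cmod (Y w))\<^sup>2)" if "j \<in> {1..K}" for j Y
    using that transmit_powers \<rho>_pos q by (simp add: norm_mult power_mult_distrib)
  have Ds: "(cmod (integral\<^sup>L P (\<lambda>w. of_real (sqrt (\<rho> * pd k) * q) * (\<Sum>i<M. cnj (est k i w) * h k i w))))\<^sup>2
      = \<rho> * pd k * q\<^sup>2 * (M * g)\<^sup>2"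
    using pos q \<rho>_pos g by (simp add: mean_mrc_channel norm_mult power_mult_distrib g_def)
  have UI: "(\<Sum>j\<in>{1..K} - {k}. integral\<^sup>L P (\<lambda>w. (cmod (of_real (sqrt (\<rho> * pd j) * q)
        * (\<Sum>i<M. cnj (est k i w) * h j i w)))\<^sup>2))
      = \<rho> * q\<^sup>2 * (M * g) * (S - pd k * \<beta> k)"
  proof -
    have "(\<Sum>j\<in>{1..K} - {k}. integral\<^sup>L P (\<lambda>w. (cmod (of_real (sqrt (\<rho> * pd j) * q)
        * (\<Sum>i<M. cnj (est k i w) * h j i w)))\<^sup>2))
        = (\<Sum>j\<in>{1..K} - {k}. \<rho> * q\<^sup>2 * (M * g) * (pd j * \<beta> j))"
      using scale second_moment_mrc_interference by (intro sum.cong) (auto simp: g_def)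
    also have "\<dots> = \<rho> * q\<^sup>2 * (M * g) * (S - pd k * \<beta> k)"
      using k by (simp add: S_def sum_diff1 flip: sum_distrib_left)
    finally show ?thesis .
  qed
  have rate: "uplink_rate P M K T TU \<Phi> \<rho> d pd h n (\<lambda>j i w. \<Phi> * d i * est j i w) k
      = real TU / real T * log 2 (1 + \<rho> * pd k * q\<^sup>2 * (M * g)\<^sup>2 /
          ((\<rho> * pd k * q\<^sup>2 * (M * (mmse_gain k * (\<beta> k)\<^sup>2) + (M * g)\<^sup>2) - \<rho> * pd k * q\<^sup>2 * (M * g)\<^sup>2)
            + \<rho> * q\<^sup>2 * (M * g) * (S - pd k * \<beta> k) + M * (q * g * \<sigma>2)))"
    unfolding uplink_rate_def Let_def sig scale[OF k] second_moment_mrc_channel Ds UI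
      second_moment_mrc_noise
    unfolding q_def g_def ..
  have den: "(\<rho> * pd k * q\<^sup>2 * (M * (mmse_gain k * (\<beta> k)\<^sup>2) + (M * g)\<^sup>2) - \<rho> * pd k * q\<^sup>2 * (M * g)\<^sup>2)
      + \<rho> * q\<^sup>2 * (M * g) * (S - pd k * \<beta> k) + M * (q * g * \<sigma>2)
      = (M * q * g) * (\<rho> * q * S + \<sigma>2)"
    by (simp add: g_def algebra_simps power2_eq_square)
  have g_eq: "g = \<rho> * K * pp k * (\<beta> k)\<^sup>2 * q / D"
    unfolding g_def mmse_gain_def D_def q_def by (simp add: power2_eq_square mult_ac)
  have "\<rho> * q * S + \<sigma>2 > 0"
    using \<rho>_pos q S noise_power_pos by (simp add: add_nonneg_pos)
  have "M * q * g \<noteq> 0"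
    using q g \<open>M > 0\<close> by simp
  have "\<rho> * pd k * q\<^sup>2 * (M * g)\<^sup>2 / ((M * q * g) * (\<rho> * q * S + \<sigma>2))
      = (\<rho> * pd k * q * (M * g)) * (M * q * g) / ((\<rho> * q * S + \<sigma>2) * (M * q * g))"
    by (simp add: power2_eq_square mult_ac)
  also have "\<dots> = \<rho> * pd k * q * (M * g) / (\<rho> * q * S + \<sigma>2)"
    using \<open>M * q * g \<noteq> 0\<close> by (rule mult_divide_mult_cancel_right)
  also have "\<dots> = (M * pd k * \<rho> * K * pp k * (\<beta> k)\<^sup>2 * q) / ((S + \<sigma>2 / (q * \<rho>)) * D)"
    unfolding g_eq using q D \<rho>_pos \<open>\<rho> * q * S + \<sigma>2 > 0\<close>
    by (simp add: field_simps power2_eq_square)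
  finally have sinr: "\<rho> * pd k * q\<^sup>2 * (M * g)\<^sup>2 / ((M * q * g) * (\<rho> * q * S + \<sigma>2))
      = (M * pd k * \<rho> * K * pp k * (\<beta> k)\<^sup>2 * q) / ((S + \<sigma>2 / (q * \<rho>)) * D)" .
  show ?thesis
    unfolding rate den sinr q_def[symmetric] S_def[symmetric] D_def by (simp add: mult_ac)
qed

end

end

theorem theorem1:
  fixes P :: "'w measure" and M K T TU :: nat and \<Phi> :: complex and \<rho> \<sigma>2 :: real
    and d :: "nat \<Rightarrow> complex" and \<beta> pp pd :: "nat \<Rightarrow> real"
    and h z :: "nat \<Rightarrow> nat \<Rightarrow> 'w \<Rightarrow> complex" and n :: "nat \<Rightarrow> 'w \<Rightarrow> complex" and k :: nat
  assumes "prob_space P"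
    and "M > 0" and "K > 0" and "T > 0"
    and "\<Phi> \<noteq> 0" and "\<rho> > 0" and "\<sigma>2 > 0"
    and "\<forall>i<M. cmod (d i) = 1"
    and "\<forall>j\<in>{1..K}. \<beta> j > 0 \<and> pp j > 0 \<and> pd j \<ge> 0"
    and "\<forall>g\<in>gidx_set M K. distributed P lborel (gaussian_family h z n g)
            (\<lambda>x. ennreal (normal_density 0 (sqrt (gidx_var \<beta> \<sigma>2 g)) x))"
    and "prob_space.indep_vars P (\<lambda>_. borel) (gaussian_family h z n) (gidx_set M K)"
    and "k \<in> {1..K}"
  shows "uplink_rate P M K T TU \<Phi> \<rho> d pd h n
           (\<lambda>j i w. \<Phi> * d i * mmse_est \<rho> (real K) \<sigma>2 \<Phi> d \<beta> pp h z j i w) k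
         \<ge> real TU / real T * log 2 (1 +
             (real M * pd k * \<rho> * real K * pp k * (\<beta> k)\<^sup>2 * (cmod \<Phi>)\<^sup>2) /
             (((\<Sum>j=1..K. pd j * \<beta> j) + \<sigma>2 / ((cmod \<Phi>)\<^sup>2 * \<rho>))
               * (\<rho> * real K * pp k * \<beta> k * (cmod \<Phi>)\<^sup>2 + \<sigma>2)))"
proof -
  interpret mrc_uplink P M K \<beta> \<sigma>2 h z n \<Phi> \<rho> d pp pd
    unfolding mrc_uplink_def mrc_uplink_axioms_def gaussian_channels_def gaussian_channels_axioms_def
    using assms by auto
  show ?thesis
    using uplink_rate_mrc[OF \<open>k \<in> {1..K}\<close> \<open>M > 0\<close>] by simp
qed

end
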